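(* $C(X)_\mathcal{P}$ is a clean ring if and only if it is an almost clean ring.
   Context: Let $(X,\tau)$ be a $T_1$ topological space and $\mathcal{P}$ an ideal of closed subsets of $X$ (a nonempty family of closed sets closed under finite unions and under taking closed subsets). For $f\colon X\to\mathbb{R}$, $D_f$ denotes the set of points of discontinuity of $f$, and $C(X)_\mathcal{P}=\{f\colon X\to\mathbb{R} : \overline{D_f}\in\mathcal{P}\}$, a commutative ring with unity under pointwise operations. A ring is clean if every element is the sum of a unit and an idempotent, and almost clean if every element is the sum of a regular element (a non-zero-divisor) and an idempotent. *)

theory Defs
  imports "HOL-Analysis.Analysis" "HOL-Algebra.Ring"
begin

definition discont_points :: "'a topology \<Rightarrow> ('a \<Rightarrow> real) \<Rightarrow> 'a set" where
  "discont_points X f = {x \<in> topspace X. \<not> limitin euclideanreal f (f x) (atin X x)}"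

definition closed_ideal :: "'a topology \<Rightarrow> 'a set set \<Rightarrow> bool" where
  "closed_ideal X P \<longleftrightarrow> P \<noteq> {} \<and> (\<forall>A\<in>P. closedin X A)
     \<and> (\<forall>A\<in>P. \<forall>B\<in>P. A \<union> B \<in> P)
     \<and> (\<forall>A\<in>P. \<forall>B. closedin X B \<and> B \<subseteq> A \<longrightarrow> B \<in> P)"

text \<open>Functions X \<rightarrow> R are represented extensionally (value 0 off topspace X).\<close>
definition CP :: "'a topology \<Rightarrow> 'a set set \<Rightarrow> ('a \<Rightarrow> real) set" where
  "CP X P = {f. (\<forall>x. x \<notin> topspace X \<longrightarrow> f x = 0) \<and> X closure_of (discont_points X f) \<in> P}"

definition CP_ring :: "'a topology \<Rightarrow> 'a set set \<Rightarrow> ('a \<Rightarrow> real) ring" where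
  "CP_ring X P = \<lparr>carrier = CP X P,
      monoid.mult = (\<lambda>f g x. f x * g x),
      one = (\<lambda>x. if x \<in> topspace X then 1 else 0),
      zero = (\<lambda>x. 0),
      add = (\<lambda>f g x. f x + g x)\<rparr>"

definition clean_ring :: "('b, 'm) ring_scheme \<Rightarrow> bool" where
  "clean_ring R \<longleftrightarrow> (\<forall>a\<in>carrier R. \<exists>u\<in>Units R. \<exists>e\<in>carrier R.
      e \<otimes>\<^bsub>R\<^esub> e = e \<and> a = u \<oplus>\<^bsub>R\<^esub> e)"

definition regular_elem :: "('b, 'm) ring_scheme \<Rightarrow> 'b \<Rightarrow> bool" where
  "regular_elem R r \<longleftrightarrow> r \<in> carrier R \<and>
     (\<forall>s\<in>carrier R. (r \<otimes>\<^bsub>R\<^esub> s = \<zero>\<^bsub>R\<^esub> \<or> s \<otimes>\<^bsub>R\<^esub> r = \<zero>\<^bsub>R\<^esub>) \<longrightarrow> s = \<zero>\<^bsub>R\<^esub>)"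

definition almost_clean_ring :: "('b, 'm) ring_scheme \<Rightarrow> bool" where
  "almost_clean_ring R \<longleftrightarrow> (\<forall>a\<in>carrier R. \<exists>r. regular_elem R r \<and> (\<exists>e\<in>carrier R.
      e \<otimes>\<^bsub>R\<^esub> e = e \<and> a = r \<oplus>\<^bsub>R\<^esub> e))"

end

theory Submission
  imports Defs
begin

text \<open>Clean rings are always almost clean, since units are regular. For the converse, given
  a in C(X)_P, decompose the clamped function b = max 0 (min 1 (3a - 1)), which is 0 on
  {a \<le> 1/3} and 1 on {a \<ge> 2/3}, as b = r + e with r regular and e idempotent. Wherever e
  agrees with b the regular element r vanishes, so a function of C(X)_P supported there is
  annihilated by r and hence zero. This forces e = 1 on {a < 1/3} and e = 0 on {a > 2/3}, so
  a - e has no zeros on X and is a unit.\<close>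

lemma eventually_in_topspace_atin: "eventually (\<lambda>y. y \<in> topspace X) (atin X x)"
  unfolding eventually_atin by (cases "x \<in> topspace X") (auto intro!: exI[of _ "topspace X"])

lemma closed_ideal_closure_of_subset:
  assumes P: "closed_ideal X P" and "X closure_of A \<in> P" "X closure_of B \<in> P" "C \<subseteq> A \<union> B"
  shows "X closure_of C \<in> P"
proof -
  have union: "\<forall>A\<in>P. \<forall>B\<in>P. A \<union> B \<in> P"
    and down: "\<forall>A\<in>P. \<forall>B. closedin X B \<and> B \<subseteq> A \<longrightarrow> B \<in> P"
    using P unfolding closed_ideal_def by blast+
  have "X closure_of C \<subseteq> (X closure_of A) \<union> (X closure_of B)"
    using closure_of_mono[OF assms(4)] by (simp only: closure_of_Un)
  moreover have "(X closure_of A) \<union> (X closure_of B) \<in> P" using union assms(2,3) by blast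
  ultimately show ?thesis using down closedin_closure_of by blast
qed

lemma CP_vanishes_outside: "f \<in> CP X P \<Longrightarrow> x \<notin> topspace X \<Longrightarrow> f x = 0"
  unfolding CP_def by auto

lemma discont_points_binop_subset:
  fixes X :: "'a topology" and op :: "real \<Rightarrow> real \<Rightarrow> real"
  assumes op: "\<And>(F::'a filter) a b la lb. (a \<longlongrightarrow> la) F \<Longrightarrow> (b \<longlongrightarrow> lb) F
                 \<Longrightarrow> ((\<lambda>y. op (a y) (b y)) \<longlongrightarrow> op la lb) F"
  shows "discont_points X (\<lambda>x. if x \<in> topspace X then op (f x) (g x) else 0)
           \<subseteq> discont_points X f \<union> discont_points X g"
proof
  let ?h = "\<lambda>x. if x \<in> topspace X then op (f x) (g x) else 0"
  fix x assume x: "x \<in> discont_points X ?h"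
  then have xX: "x \<in> topspace X" unfolding discont_points_def by auto
  show "x \<in> discont_points X f \<union> discont_points X g"
  proof (rule ccontr)
    assume "x \<notin> discont_points X f \<union> discont_points X g"
    then have "(f \<longlongrightarrow> f x) (atin X x)" "(g \<longlongrightarrow> g x) (atin X x)"
      using xX unfolding discont_points_def by auto
    then have "((\<lambda>y. op (f y) (g y)) \<longlongrightarrow> op (f x) (g x)) (atin X x)" by (rule op)
    moreover have "eventually (\<lambda>y. op (f y) (g y) = ?h y) (atin X x)"
      using eventually_in_topspace_atin[of X x] by eventually_elim auto
    ultimately have "(?h \<longlongrightarrow> ?h x) (atin X x)" using xX tendsto_cong by force
    then show False using x unfolding discont_points_def by auto
  qed
qed

lemma CP_binop:
  fixes X :: "'a topology" and op :: "real \<Rightarrow> real \<Rightarrow> real"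
  assumes "closed_ideal X P" "f \<in> CP X P" "g \<in> CP X P"
    and "\<And>(F::'a filter) a b la lb. (a \<longlongrightarrow> la) F \<Longrightarrow> (b \<longlongrightarrow> lb) F
           \<Longrightarrow> ((\<lambda>y. op (a y) (b y)) \<longlongrightarrow> op la lb) F"
  shows "(\<lambda>x. if x \<in> topspace X then op (f x) (g x) else 0) \<in> CP X P"
proof -
  have "X closure_of discont_points X (\<lambda>x. if x \<in> topspace X then op (f x) (g x) else 0) \<in> P"
    by (rule closed_ideal_closure_of_subset[OF assms(1) _ _ discont_points_binop_subset[OF assms(4)]])
      (use assms(2,3) in \<open>simp_all add: CP_def\<close>)
  then show ?thesis unfolding CP_def by simp
qed

lemma CP_inverse:
  assumes "closed_ideal X P" "u \<in> CP X P" "\<forall>x\<in>topspace X. u x \<noteq> 0"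
  shows "(\<lambda>x. inverse (u x)) \<in> CP X P"
proof -
  have "discont_points X (\<lambda>x. inverse (u x)) \<subseteq> discont_points X u"
    using assms(3) by (auto simp: discont_points_def intro: tendsto_inverse)
  then have "X closure_of discont_points X (\<lambda>x. inverse (u x)) \<in> P"
    using closed_ideal_closure_of_subset[OF assms(1), of "discont_points X u" "discont_points X u"]
      assms(2) by (simp add: CP_def)
  then show ?thesis using assms(2) by (simp add: CP_def)
qed

lemma CP_ring_simps:
  "carrier (CP_ring X P) = CP X P"
  "mult (CP_ring X P) = (\<lambda>f g x. f x * g x)"
  "one (CP_ring X P) = (\<lambda>x. if x \<in> topspace X then 1 else 0)"
  "zero (CP_ring X P) = (\<lambda>x. 0)"
  "add (CP_ring X P) = (\<lambda>f g x. f x + g x)"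
  by (simp_all add: CP_ring_def)

lemma Units_CP_ring_iff:
  assumes "closed_ideal X P"
  shows "u \<in> Units (CP_ring X P) \<longleftrightarrow> u \<in> CP X P \<and> (\<forall>x\<in>topspace X. u x \<noteq> 0)"
proof
  assume "u \<in> Units (CP_ring X P)"
  then obtain v where "u \<in> CP X P" "(\<lambda>x. v x * u x) = (\<lambda>x. if x \<in> topspace X then 1 else 0)"
    unfolding Units_def CP_ring_simps by blast
  then show "u \<in> CP X P \<and> (\<forall>x\<in>topspace X. u x \<noteq> 0)"
    by (metis mult_zero_right zero_neq_one)
next
  assume u: "u \<in> CP X P \<and> (\<forall>x\<in>topspace X. u x \<noteq> 0)"
  then have "(\<lambda>x. inverse (u x)) \<in> CP X P" using CP_inverse[OF assms] by blast
  moreover have "(\<lambda>x. inverse (u x) * u x) = (\<lambda>x. if x \<in> topspace X then 1 else 0)"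
    "(\<lambda>x. u x * inverse (u x)) = (\<lambda>x. if x \<in> topspace X then 1 else 0)"
    using u CP_vanishes_outside by (auto simp: fun_eq_iff)
  ultimately show "u \<in> Units (CP_ring X P)"
    using u unfolding Units_def CP_ring_simps by (intro CollectI conjI bexI) auto
qed

lemma regular_elem_CP_ring_iff:
  "regular_elem (CP_ring X P) r \<longleftrightarrow>
     r \<in> CP X P \<and> (\<forall>s\<in>CP X P. (\<forall>x. r x * s x = 0) \<longrightarrow> s = (\<lambda>x. 0))"
  unfolding regular_elem_def CP_ring_simps fun_eq_iff by (auto simp: mult.commute)

lemma Units_CP_ring_regular:
  assumes "closed_ideal X P" "u \<in> Units (CP_ring X P)"
  shows "regular_elem (CP_ring X P) u"
  unfolding regular_elem_CP_ring_iff
proof (intro conjI ballI impI)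
  show u: "u \<in> CP X P" using assms Units_CP_ring_iff by blast
  fix s assume s: "s \<in> CP X P" and us: "\<forall>x. u x * s x = 0"
  show "s = (\<lambda>x. 0)"
  proof
    fix x show "s x = 0"
      using us Units_CP_ring_iff[OF assms(1)] assms(2) CP_vanishes_outside[OF s]
      by (cases "x \<in> topspace X") auto
  qed
qed

lemma CP_ring_sub_idempotent_unit:
  assumes P: "closed_ideal X P" and a: "a \<in> CP X P"
    and r: "regular_elem (CP_ring X P) r" and e: "e \<in> CP X P" "\<And>x. e x * e x = e x"
    and decomp: "\<And>x. x \<in> topspace X \<Longrightarrow> r x + e x = max 0 (min 1 (3 * a x - 1))"
  shows "(\<lambda>x. a x - e x) \<in> Units (CP_ring X P)"
proof -
  have e01: "e x = 0 \<or> e x = 1" for x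
    using e(2)[of x] by (metis mult_cancel_right1 mult_eq_0_iff)
  have annihilated: "s = (\<lambda>x. 0)" if "s \<in> CP X P" "\<And>x. r x * s x = 0" for s
    using r that unfolding regular_elem_CP_ring_iff by blast
  define s where "s = (\<lambda>x. if x \<in> topspace X then max 0 (1/3 - a x) * (1 - e x) else 0)"
  have "s \<in> CP X P"
    unfolding s_def by (rule CP_binop[OF P a e(1)]) (intro tendsto_intros)
  moreover have "r x * s x = 0" for x
    using decomp[of x] e01[of x] by (auto simp: s_def)
  ultimately have "s = (\<lambda>x. 0)" by (rule annihilated)
  then have e_low: "e x = 1" if "x \<in> topspace X" "a x < 1/3" for x
  proof -
    have "max 0 (1/3 - a x) * (1 - e x) = 0"
      using fun_cong[OF \<open>s = (\<lambda>x. 0)\<close>, of x] that(1) by (simp add: s_def)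
    then show ?thesis using that(2) by auto
  qed
  define t where "t = (\<lambda>x. if x \<in> topspace X then max 0 (a x - 2/3) * e x else 0)"
  have "t \<in> CP X P"
    unfolding t_def by (rule CP_binop[OF P a e(1)]) (intro tendsto_intros)
  moreover have "r x * t x = 0" for x
    using decomp[of x] e01[of x] by (auto simp: t_def)
  ultimately have "t = (\<lambda>x. 0)" by (rule annihilated)
  then have e_high: "e x = 0" if "x \<in> topspace X" "a x > 2/3" for x
  proof -
    have "max 0 (a x - 2/3) * e x = 0"
      using fun_cong[OF \<open>t = (\<lambda>x. 0)\<close>, of x] that(1) by (simp add: t_def)
    then show ?thesis using that(2) by auto
  qed
  have "(\<lambda>x. a x - e x) = (\<lambda>x. if x \<in> topspace X then a x - e x else 0)"
    using CP_vanishes_outside[OF a] CP_vanishes_outside[OF e(1)] by (auto simp: fun_eq_iff)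
  also have "\<dots> \<in> CP X P" by (rule CP_binop[OF P a e(1)]) (intro tendsto_intros)
  finally have "(\<lambda>x. a x - e x) \<in> CP X P" .
  moreover have "a x - e x \<noteq> 0" if "x \<in> topspace X" for x
    using e01[of x] e_low[OF that] e_high[OF that] by fastforce
  ultimately show ?thesis using Units_CP_ring_iff[OF P] by blast
qed

lemma almost_clean_CP_ring_imp_clean:
  assumes P: "closed_ideal X P" and almost_clean: "almost_clean_ring (CP_ring X P)"
  shows "clean_ring (CP_ring X P)"
  unfolding clean_ring_def
proof
  fix a assume "a \<in> carrier (CP_ring X P)"
  then have a: "a \<in> CP X P" by (simp add: CP_ring_simps)
  define b where "b = (\<lambda>x. if x \<in> topspace X then max 0 (min 1 (3 * a x - 1)) else 0)"
  have "b \<in> carrier (CP_ring X P)"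
    unfolding b_def CP_ring_simps by (rule CP_binop[OF P a a]) (intro tendsto_intros)
  with almost_clean obtain r e where r: "regular_elem (CP_ring X P) r"
    and e: "e \<in> carrier (CP_ring X P)" "e \<otimes>\<^bsub>CP_ring X P\<^esub> e = e"
    and b: "b = r \<oplus>\<^bsub>CP_ring X P\<^esub> e"
    unfolding almost_clean_ring_def by blast
  have "(\<lambda>x. a x - e x) \<in> Units (CP_ring X P)"
  proof (rule CP_ring_sub_idempotent_unit[OF P a r])
    show "e \<in> CP X P" using e(1) by (simp add: CP_ring_simps)
    show "e x * e x = e x" for x using fun_cong[OF e(2), of x] by (simp add: CP_ring_simps)
    show "r x + e x = max 0 (min 1 (3 * a x - 1))" if "x \<in> topspace X" for x
      using fun_cong[OF b, of x] that by (simp add: CP_ring_simps b_def)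
  qed
  moreover have "a = (\<lambda>x. a x - e x) \<oplus>\<^bsub>CP_ring X P\<^esub> e" by (simp add: CP_ring_simps)
  ultimately show "\<exists>u\<in>Units (CP_ring X P). \<exists>e\<in>carrier (CP_ring X P).
      e \<otimes>\<^bsub>CP_ring X P\<^esub> e = e \<and> a = u \<oplus>\<^bsub>CP_ring X P\<^esub> e"
    using e by (intro bexI[of _ "\<lambda>x. a x - e x"] bexI[of _ e] conjI)
qed

theorem theorem3p12:
  fixes X :: "'a topology" and P :: "'a set set"
  assumes "t1_space X" and "closed_ideal X P"
  shows "clean_ring (CP_ring X P) \<longleftrightarrow> almost_clean_ring (CP_ring X P)"
proof
  assume "clean_ring (CP_ring X P)"
  then show "almost_clean_ring (CP_ring X P)"
    unfolding clean_ring_def almost_clean_ring_def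
    using Units_CP_ring_regular[OF assms(2)] by blast
next
  assume "almost_clean_ring (CP_ring X P)"
  then show "clean_ring (CP_ring X P)" by (rule almost_clean_CP_ring_imp_clean[OF assms(2)])
qed

end
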